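(* For any $m>0$, $\delta>0$, $R\ge1$, $N>-1$ and $p\ge0$ there is a constant $C>0$ (depending on $R,\delta,p,N,m$ but not on $a,d,x$) such that $$x^{N+1-p}\int_{R/x^2}^{\infty}e^{-\frac{x^{2m}}{2}(1+r^{2m})+ax^d(1+\delta r^d)}\,r^N\,dr\le C(1+a)^{\max\left(0,\frac{N+p+1}{m}-1\right)}e^{\frac{1+\delta^2}{2}a^2}$$ and $$x^{m}\int_{R/x^2}^{\infty}e^{-\frac{x^{2m}}{2}(1-r^{m})^2+ax^d(1-r^d)}\,r^{m/2}\,dr\le C(1+a)e^{\frac{a^2}{2}}$$ for all $x>0$, $a>0$, and $0\le d\le m$. *)

theory Defs
  imports "HOL-Analysis.Analysis"
begin

end

theory Submission
  imports Defs "HOL-Real_Asymp.Real_Asymp"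
begin

(* Each integral is bounded by one device: on [R/x^2, oo) the integrand is dominated by
   K(a) F' for an explicit bounded F built from arctan and 1/(1 + t^c), so the integral is
   at most K(a) (sup F - F(R/x^2)).  The pointwise bounds come from completing the square in
   the exponent, -u^2/2 + b u = b^2/2 - (u - b)^2/2, after which the remaining Gaussian
   factor absorbs the leftover powers of u (Peetre's inequality) and leaves 1/(1 + (u - b)^2).
   In the first integral the squares are completed in x with slope a and in t = x r with
   slope b = a delta, which produces the factor exp((1 + delta^2) a^2 / 2).  The lower limit
   r >= R/x^2 >= 1/x^2 keeps the Gaussian decaying in r uniformly in x: it gives
   x^m r^m >= r^(m/2) and x^(-p) <= t^p. *)

section \<open>Elementary inequalities\<close>

lemma one_plus_sq_le_exp: "1 + y\<^sup>2 \<le> 4 * exp (y\<^sup>2 / 4)" for y :: real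
  using exp_ge_add_one_self[of "y\<^sup>2 / 4"] zero_le_power2[of y] by linarith

lemma exp_neg_sq_le_inverse: "exp (- (y\<^sup>2) / 4) \<le> 4 / (1 + y\<^sup>2)" for y :: real
proof -
  have "exp (- (y\<^sup>2) / 4) * (1 + y\<^sup>2) \<le> exp (- (y\<^sup>2) / 4) * (4 * exp (y\<^sup>2 / 4))"
    using one_plus_sq_le_exp by (intro mult_left_mono) auto
  also have "\<dots> = 4" by (simp add: exp_minus field_simps)
  finally show ?thesis by (simp add: field_simps add_pos_nonneg)
qed

lemma exp_neg_sq_mult_poly_le:
  fixes y K :: real
  assumes "K \<ge> 0"
  shows "exp (- (y\<^sup>2) / 2) * (1 + y\<^sup>2) * (2 * (1 + \<bar>y\<bar>)) powr K \<le> 4 * 2 powr K * exp (K\<^sup>2)"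
proof -
  have "2 * (1 + \<bar>y\<bar>) \<le> 2 * exp \<bar>y\<bar>"
    using mult_left_mono[OF exp_ge_add_one_self[of "\<bar>y\<bar>"], of 2] by simp
  then have "(2 * (1 + \<bar>y\<bar>)) powr K \<le> (2 * exp \<bar>y\<bar>) powr K"
    using assms by (intro powr_mono2) auto
  also have "\<dots> = 2 powr K * exp (K * \<bar>y\<bar>)"
    by (simp add: powr_def ln_mult exp_add[symmetric] algebra_simps)
  finally have poly: "(2 * (1 + \<bar>y\<bar>)) powr K \<le> 2 powr K * exp (K * \<bar>y\<bar>)" .
  have square: "- (y\<^sup>2) / 2 + y\<^sup>2 / 4 + K * \<bar>y\<bar> \<le> K\<^sup>2"
    using zero_le_power2[of "\<bar>y\<bar> / 2 - K"]
    by (simp add: power2_eq_square algebra_simps abs_mult_self_eq)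
  have "exp (- (y\<^sup>2) / 2) * (1 + y\<^sup>2) * (2 * (1 + \<bar>y\<bar>)) powr K
      \<le> exp (- (y\<^sup>2) / 2) * (4 * exp (y\<^sup>2 / 4)) * (2 powr K * exp (K * \<bar>y\<bar>))"
    using one_plus_sq_le_exp poly by (intro mult_mono) auto
  also have "\<dots> = 4 * 2 powr K * exp (- (y\<^sup>2) / 2 + y\<^sup>2 / 4 + K * \<bar>y\<bar>)"
    by (simp only: exp_add mult_ac)
  also have "\<dots> \<le> 4 * 2 powr K * exp (K\<^sup>2)"
    using square by simp
  finally show ?thesis .
qed

lemma peetre_powr_le:
  fixes s b e :: real
  assumes s: "s \<ge> 1" and b: "b \<ge> 0"
  shows "s powr e \<le> (1 + b) powr e * (2 * (1 + \<bar>s - b\<bar>)) powr \<bar>e\<bar>"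
proof -
  define z where "z = \<bar>s - b\<bar>"
  have z: "s - b \<le> z" "b - s \<le> z" "0 \<le> z"
    by (auto simp: z_def)
  show ?thesis
  proof (cases "e \<ge> 0")
    case True
    have "(1 + b) * (2 * (1 + z)) = 2 + 2 * b + 2 * z + 2 * (b * z)"
      by (simp add: algebra_simps)
    then have "s \<le> (1 + b) * (2 * (1 + z))"
      using s b z mult_nonneg_nonneg[OF b \<open>0 \<le> z\<close>] by linarith
    then have "s powr e \<le> ((1 + b) * (2 * (1 + z))) powr e"
      using True s by (intro powr_mono2) auto
    then show ?thesis
      using True b z by (simp add: z_def powr_mult)
  next
    case False
    have "1 * z \<le> s * z"
      using s z by (intro mult_right_mono) auto
    moreover have "s * (2 * (1 + z)) = 2 * s + 2 * (s * z)"
      by (simp add: algebra_simps)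
    ultimately have "1 + b \<le> s * (2 * (1 + z))"
      using s z by linarith
    then have "(1 + b) powr (- e) \<le> s powr (- e) * (2 * (1 + z)) powr (- e)"
      using False b z by (simp add: powr_mult[symmetric] powr_mono2)
    then show ?thesis
      using False b s z by (simp add: z_def powr_minus field_simps)
  qed
qed

lemma gaussian_powr_le:
  fixes s b e :: real
  assumes s: "s \<ge> 1" and b: "b \<ge> 0"
  shows "exp (- ((s - b)\<^sup>2) / 2) * s powr e
    \<le> 4 * 2 powr \<bar>e\<bar> * exp (\<bar>e\<bar>\<^sup>2) * (1 + b) powr e / (1 + (s - b)\<^sup>2)"
proof -
  have "exp (- ((s - b)\<^sup>2) / 2) * s powr e * (1 + (s - b)\<^sup>2)
      \<le> exp (- ((s - b)\<^sup>2) / 2) * ((1 + b) powr e * (2 * (1 + \<bar>s - b\<bar>)) powr \<bar>e\<bar>) * (1 + (s - b)\<^sup>2)"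
    using peetre_powr_le[OF s b] by (intro mult_right_mono mult_left_mono) auto
  also have "\<dots> = (1 + b) powr e
      * (exp (- ((s - b)\<^sup>2) / 2) * (1 + (s - b)\<^sup>2) * (2 * (1 + \<bar>s - b\<bar>)) powr \<bar>e\<bar>)"
    by (simp add: algebra_simps)
  also have "\<dots> \<le> (1 + b) powr e * (4 * 2 powr \<bar>e\<bar> * exp (\<bar>e\<bar>\<^sup>2))"
    using exp_neg_sq_mult_poly_le[of "\<bar>e\<bar>" "s - b"] by (intro mult_left_mono) auto
  finally show ?thesis
    by (simp add: field_simps add_pos_nonneg)
qed

lemma powr_le_mult_exp:
  fixes w \<gamma> \<kappa> :: real
  assumes "\<gamma> \<ge> 0" "\<kappa> > 0" "w \<ge> 0"
  shows "w powr \<gamma> \<le> (max \<gamma> 1 / \<kappa>) powr \<gamma> * exp (\<kappa> * w)"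
proof (cases "w = 0 \<or> \<gamma> = 0")
  case True
  then show ?thesis using assms by auto
next
  case False
  define g where "g = max \<gamma> 1"
  have g: "g \<ge> 1" "g \<ge> \<gamma>" by (auto simp: g_def)
  have w: "w > 0" using False assms by auto
  have "\<gamma> * ln (\<kappa> * w / g) \<le> \<gamma> * (\<kappa> * w / g)"
    using ln_le_minus_one[of "\<kappa> * w / g"] w g assms by (intro mult_left_mono) auto
  also have "\<dots> \<le> \<kappa> * w"
    using g assms w by (simp add: divide_le_eq)
  finally have exp_bound: "(\<kappa> * w / g) powr \<gamma> \<le> exp (\<kappa> * w)"
    using w g assms by (simp add: powr_def)
  have "w powr \<gamma> = (g / \<kappa> * (\<kappa> * w / g)) powr \<gamma>"
    using g assms by simp
  also have "\<dots> = (g / \<kappa>) powr \<gamma> * (\<kappa> * w / g) powr \<gamma>"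
    by (rule powr_mult)
  also have "\<dots> \<le> (g / \<kappa>) powr \<gamma> * exp (\<kappa> * w)"
    using exp_bound by (intro mult_left_mono) auto
  finally show ?thesis
    by (simp add: g_def)
qed

lemma neg_half_powr_add_le:
  fixes x a d m :: real
  assumes x: "x > 0" and a: "a \<ge> 0" and d: "0 \<le> d" "d \<le> m"
  shows "- (x powr (2 * m)) / 2 + a * x powr d \<le> a\<^sup>2 / 2 + 1 / 2"
proof (cases "x \<ge> 1")
  case True
  have "a * x powr d \<le> a * x powr m"
    using True d a by (intro mult_left_mono powr_mono) auto
  moreover have "x powr (2 * m) = (x powr m)\<^sup>2"
    using x by (simp add: power2_eq_square powr_add[symmetric])
  moreover have "- (x powr m)\<^sup>2 / 2 + a * x powr m \<le> a\<^sup>2 / 2"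
    using zero_le_power2[of "x powr m - a"] by (simp add: power2_eq_square algebra_simps)
  ultimately show ?thesis by linarith
next
  case False
  have "a * x powr d \<le> a"
    using False x d a powr_mono2[of d x 1] by (simp add: mult_left_le)
  moreover have "a \<le> a\<^sup>2 / 2 + 1 / 2"
    using zero_le_power2[of "a - 1"] by (simp add: power2_eq_square algebra_simps)
  ultimately show ?thesis
    using powr_ge_zero[of x "2 * m"] by linarith
qed

lemma mult_exp_neg_sq_shift_le:
  fixes X v a :: real
  assumes X: "X \<ge> 0" and a: "a \<ge> 0" and v: "v \<ge> X / 2"
  shows "X * exp (- ((v - a)\<^sup>2) / 2) \<le> 4 * a + 8"
proof (cases "X \<le> 4 * a")
  case True
  then show ?thesis
    using mult_left_mono[of "exp (- ((v - a)\<^sup>2) / 2)" 1 X] X by simp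
next
  case False
  have "(X / 4)\<^sup>2 \<le> (v - a)\<^sup>2"
    using v False X by (intro power_mono) auto
  then have "X * exp (- ((v - a)\<^sup>2) / 2) \<le> X * exp (- (X\<^sup>2) / 32)"
    using X by (intro mult_left_mono) (auto simp: power_divide)
  also have "\<dots> \<le> (8 + X\<^sup>2 / 32) * exp (- (X\<^sup>2) / 32)"
    using zero_le_power2[of "X - 16"] by (intro mult_right_mono) (auto simp: power2_eq_square algebra_simps)
  also have "\<dots> \<le> 8 * exp (X\<^sup>2 / 32) * exp (- (X\<^sup>2) / 32)"
  proof (intro mult_right_mono)
    show "8 + X\<^sup>2 / 32 \<le> 8 * exp (X\<^sup>2 / 32)"
      using exp_ge_add_one_self[of "X\<^sup>2 / 32"] zero_le_power2[of X] by linarith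
  qed simp
  also have "\<dots> = 8"
    by (simp add: exp_minus field_simps)
  finally show ?thesis
    using a by linarith
qed

lemma one_plus_mult_powr_le:
  fixes a \<delta> e k :: real
  assumes a: "a \<ge> 0" and \<delta>: "\<delta> \<ge> 0" and k: "e \<le> k" "0 \<le> k"
  shows "(1 + a * \<delta>) powr e \<le> max 1 \<delta> powr k * (1 + a) powr k"
proof -
  have "(1 + a * \<delta>) powr e \<le> (1 + a * \<delta>) powr k"
    using a \<delta> k by (intro powr_mono) auto
  also have "\<dots> \<le> (max 1 \<delta> * (1 + a)) powr k"
    using a \<delta> k mult_right_mono[of \<delta> "max 1 \<delta>" a] by (intro powr_mono2) (auto simp: algebra_simps)
  also have "\<dots> = max 1 \<delta> powr k * (1 + a) powr k"
    by (rule powr_mult)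
  finally show ?thesis .
qed

lemma powr_exp_gaussian_le:
  fixes t m d b e :: real
  assumes t: "t \<ge> 1" and m: "m > 0" and d: "0 \<le> d" "d \<le> m" and b: "b \<ge> 0"
  shows "t powr (m - 1 + m * e) * exp (- (t powr (2 * m)) / 2 + b * t powr d)
    \<le> 4 * 2 powr \<bar>e\<bar> * exp (\<bar>e\<bar>\<^sup>2) * exp (b\<^sup>2 / 2) * (1 + b) powr e
      * (t powr (m - 1) / (1 + (t powr m - b)\<^sup>2))"
proof -
  define u where "u = t powr m"
  have u: "u \<ge> 1"
    using t m by (simp add: u_def ge_one_powr_ge_zero)
  have "b * t powr d \<le> b * u"
    unfolding u_def using t d b by (intro mult_left_mono powr_mono) auto
  moreover have "t powr (2 * m) = u\<^sup>2"
    using t by (simp add: u_def power2_eq_square powr_add[symmetric])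
  moreover have "- (u\<^sup>2) / 2 + b * u = b\<^sup>2 / 2 + - ((u - b)\<^sup>2) / 2"
    by (simp add: power2_eq_square field_simps)
  ultimately have exponent: "- (t powr (2 * m)) / 2 + b * t powr d \<le> b\<^sup>2 / 2 + - ((u - b)\<^sup>2) / 2"
    by linarith
  have "t powr (m - 1 + m * e) = t powr (m - 1) * u powr e"
    using t by (simp add: u_def powr_add powr_powr)
  then have "t powr (m - 1 + m * e) * exp (- (t powr (2 * m)) / 2 + b * t powr d)
      \<le> t powr (m - 1) * u powr e * exp (b\<^sup>2 / 2 + - ((u - b)\<^sup>2) / 2)"
    using exponent by (simp add: mult_left_mono)
  also have "\<dots> = exp (b\<^sup>2 / 2) * t powr (m - 1) * (exp (- ((u - b)\<^sup>2) / 2) * u powr e)"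
    by (simp only: exp_add mult_ac)
  also have "\<dots> \<le> exp (b\<^sup>2 / 2) * t powr (m - 1)
      * (4 * 2 powr \<bar>e\<bar> * exp (\<bar>e\<bar>\<^sup>2) * (1 + b) powr e / (1 + (u - b)\<^sup>2))"
    using gaussian_powr_le[OF u b] by (intro mult_left_mono) auto
  finally show ?thesis
    by (simp add: u_def mult_ac)
qed

lemma powr_half_le_mult_powr:
  fixes m x r :: real
  assumes m: "m \<ge> 0" and x: "x > 0" and xr: "1 \<le> x\<^sup>2 * r"
  shows "r powr (m / 2) \<le> x powr m * r powr m"
proof -
  have r: "r > 0"
    using zero_less_mult_pos[of "x\<^sup>2" r] xr x by simp
  have "x powr m * r powr m = (x\<^sup>2 * r) powr (m / 2) * r powr (m / 2)"
    using x r by (simp add: powr_mult powr_powr powr_add[symmetric] flip: powr_numeral)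
  moreover have "1 \<le> (x\<^sup>2 * r) powr (m / 2)"
    using xr m by (intro ge_one_powr_ge_zero) auto
  ultimately show ?thesis
    by (simp add: mult_le_cancel_right1)
qed

lemma powr_half_le_twice_powr:
  fixes m r :: real
  assumes m: "m > 0" and r: "0 < r" "r \<le> 1" and rm: "1 / 2 \<le> r powr m"
  shows "r powr (m / 2) \<le> 2 * r powr (m - 1)"
proof -
  have "r powr (1 - m / 2) \<le> 2"
  proof (cases "m \<le> 2")
    case True
    then show ?thesis
      using r powr_mono2[of "1 - m / 2" r 1] by simp
  next
    case False
    define c where "c = (1 - m / 2) / m"
    have c: "c \<le> 0" "- c \<le> 1"
      using False m by (auto simp: c_def field_simps)
    have "r powr (1 - m / 2) = (r powr m) powr c"
      using m r by (simp add: c_def powr_powr)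
    also have "\<dots> \<le> (1 / 2) powr c"
      using rm c by (intro powr_mono2') auto
    also have "\<dots> = 2 powr (- c)"
      by (simp add: powr_divide powr_minus_divide)
    also have "\<dots> \<le> 2 powr 1"
      using c by (intro powr_mono) auto
    finally show ?thesis by simp
  qed
  moreover have "r powr (m / 2) = r powr (m - 1) * r powr (1 - m / 2)"
    by (simp add: powr_add[symmetric])
  ultimately show ?thesis
    using mult_left_mono[of "r powr (1 - m / 2)" 2 "r powr (m - 1)"] by simp
qed

definition tail_decay_const :: "real \<Rightarrow> real" where
  "tail_decay_const m = max (2 powr (1 / m)) ((16 * max (2 / m) 1) powr (2 / m) * exp (1 / 64))"

lemma mult_exp_neg_sq_powr_le:
  fixes m x r :: real
  assumes m: "m > 0" and x: "x > 0" and r: "r \<ge> 1" and xr: "1 \<le> x\<^sup>2 * r"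
  shows "r * exp (- ((x powr m * (r powr m - 1))\<^sup>2) / 4) \<le> tail_decay_const m"
proof (cases "r powr m \<le> 2")
  case True
  have "r = (r powr m) powr (1 / m)"
    using r m by (simp add: powr_powr)
  also have "\<dots> \<le> 2 powr (1 / m)"
    using True m by (intro powr_mono2) auto
  finally have "r \<le> tail_decay_const m"
    by (simp add: tail_decay_const_def)
  moreover have "r * exp (- ((x powr m * (r powr m - 1))\<^sup>2) / 4) \<le> r"
    using r by (simp add: mult_le_cancel_left1)
  ultimately show ?thesis by linarith
next
  case False
  define w where "w = x powr m * r powr m"
  have w: "w \<ge> 0"
    using x r by (simp add: w_def)
  have "r = (r powr (m / 2)) powr (2 / m)"
    using m r by (simp add: powr_powr)
  also have "\<dots> \<le> w powr (2 / m)"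
    using powr_half_le_mult_powr[OF _ x xr] m by (intro powr_mono2) (auto simp: w_def)
  also have "\<dots> \<le> (16 * max (2 / m) 1) powr (2 / m) * exp (w / 16)"
    using powr_le_mult_exp[of "2 / m" "1 / 16" w] m w by (simp add: mult.commute)
  finally have r_le: "r \<le> (16 * max (2 / m) 1) powr (2 / m) * exp (w / 16)" .
  have "x powr m * 2 \<le> x powr m * r powr m"
    using False x by (intro mult_left_mono) auto
  then have "w / 2 \<le> x powr m * (r powr m - 1)"
    by (simp add: w_def algebra_simps)
  then have "(w / 2)\<^sup>2 \<le> (x powr m * (r powr m - 1))\<^sup>2"
    using w by (intro power_mono) auto
  then have exp_le: "exp (- ((x powr m * (r powr m - 1))\<^sup>2) / 4) \<le> exp (- (w\<^sup>2) / 16)"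
    by (simp add: power_divide)
  have "r * exp (- ((x powr m * (r powr m - 1))\<^sup>2) / 4)
      \<le> (16 * max (2 / m) 1) powr (2 / m) * exp (w / 16) * exp (- (w\<^sup>2) / 16)"
    using r_le exp_le r by (intro mult_mono) auto
  also have "\<dots> = (16 * max (2 / m) 1) powr (2 / m) * exp (w / 16 - w\<^sup>2 / 16)"
    by (simp add: mult.assoc mult_exp_exp)
  also have "\<dots> \<le> (16 * max (2 / m) 1) powr (2 / m) * exp (1 / 64)"
    using zero_le_power2[of "w - 1 / 2"] by (intro mult_left_mono) (auto simp: power2_eq_square algebra_simps)
  finally show ?thesis
    by (simp add: tail_decay_const_def)
qed

lemma gaussian_shift_powr_half_le:
  fixes m X a r :: real
  assumes m: "m > 0" and X: "X > 0" and a: "a \<ge> 0" and r: "0 < r" "r < 1"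
  shows "X * exp (- ((X * (1 - r powr m) - a)\<^sup>2) / 2) * r powr (m / 2)
    \<le> 8 / m * (m * X * r powr (m - 1) / (1 + (X * (1 - r powr m) - a)\<^sup>2)) + 16 * (1 + a) * (1 / (1 + r\<^sup>2))"
proof -
  define v where "v = X * (1 - r powr m)"
  have first_nonneg: "0 \<le> 8 / m * (m * X * r powr (m - 1) / (1 + (v - a)\<^sup>2))"
    using m X zero_le_power2[of "v - a"] by (intro mult_nonneg_nonneg divide_nonneg_nonneg) auto
  have second_nonneg: "0 \<le> 16 * (1 + a) * (1 / (1 + r\<^sup>2))"
    using a zero_le_power2[of r] by (intro mult_nonneg_nonneg divide_nonneg_nonneg) auto
  have "X * exp (- ((v - a)\<^sup>2) / 2) * r powr (m / 2)
    \<le> 8 / m * (m * X * r powr (m - 1) / (1 + (v - a)\<^sup>2)) + 16 * (1 + a) * (1 / (1 + r\<^sup>2))"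
  proof (cases "1 / 2 \<le> r powr m")
    case True
    have "exp (- ((v - a)\<^sup>2) / 2) \<le> exp (- ((v - a)\<^sup>2) / 4)"
      by simp
    then have "exp (- ((v - a)\<^sup>2) / 2) \<le> 4 / (1 + (v - a)\<^sup>2)"
      using exp_neg_sq_le_inverse[of "v - a"] by linarith
    moreover have "r powr (m / 2) \<le> 2 * r powr (m - 1)"
      using powr_half_le_twice_powr[OF m r(1) _ True] r(2) by simp
    ultimately have "X * exp (- ((v - a)\<^sup>2) / 2) * r powr (m / 2)
        \<le> X * (4 / (1 + (v - a)\<^sup>2)) * (2 * r powr (m - 1))"
      using X zero_le_power2[of "v - a"] by (intro mult_mono mult_left_mono) auto
    also have "\<dots> = 8 / m * (m * X * r powr (m - 1) / (1 + (v - a)\<^sup>2))"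
      using m by (simp add: field_simps)
    finally show ?thesis
      using second_nonneg by linarith
  next
    case False
    have "X * (1 / 2) \<le> X * (1 - r powr m)"
      using False X by (intro mult_left_mono) auto
    then have "X * exp (- ((v - a)\<^sup>2) / 2) \<le> 4 * a + 8"
      using mult_exp_neg_sq_shift_le[of X a v] X a by (simp add: v_def)
    moreover have "r powr (m / 2) \<le> 1"
      using r m powr_mono2[of "m / 2" r 1] by simp
    ultimately have "X * exp (- ((v - a)\<^sup>2) / 2) * r powr (m / 2) \<le> (4 * a + 8) * 1"
      using a by (intro mult_mono) auto
    also have "\<dots> \<le> 16 * (1 + a) * (1 / (1 + r\<^sup>2))"
    proof -
      have "1 / 2 \<le> 1 / (1 + r\<^sup>2)"
        using r power_le_one[of r 2] by (intro divide_left_mono) (auto intro!: add_pos_nonneg)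
      then have "16 * (1 + a) * (1 / 2) \<le> 16 * (1 + a) * (1 / (1 + r\<^sup>2))"
        using a by (intro mult_left_mono) auto
      moreover have "(4 * a + 8) * 1 \<le> 16 * (1 + a) * (1 / 2)"
        using a by simp
      ultimately show ?thesis
        by (rule order_trans[rotated])
    qed
    finally show ?thesis
      using first_nonneg by linarith
  qed
  then show ?thesis
    by (simp only: v_def)
qed

section \<open>Integrals dominated by a derivative\<close>

lemma set_nn_integral_atLeast_le_antiderivative:
  fixes f g F :: "real \<Rightarrow> real"
  assumes f: "f \<in> borel_measurable borel"
    and F: "\<And>r. L \<le> r \<Longrightarrow> DERIV F r :> f r" and f_nonneg: "\<And>r. L \<le> r \<Longrightarrow> 0 \<le> f r"
    and lim: "(F \<longlongrightarrow> T) at_top" and F_L: "T - F L \<le> B"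
    and g: "\<And>r. L \<le> r \<Longrightarrow> c * g r \<le> K * f r" and c: "c > 0" and K: "K \<ge> 0"
  shows "ennreal c * (\<integral>\<^sup>+r\<in>{L..}. ennreal (g r) \<partial>lborel) \<le> ennreal (K * B)"
proof -
  have "(\<integral>\<^sup>+r\<in>{L..}. ennreal (g r) \<partial>lborel)
      \<le> (\<integral>\<^sup>+r. ennreal (K / c) * (ennreal (f r) * indicator {L..} r) \<partial>lborel)"
  proof (intro nn_integral_mono)
    fix r
    show "ennreal (g r) * indicator {L..} r \<le> ennreal (K / c) * (ennreal (f r) * indicator {L..} r)"
    proof (cases "L \<le> r")
      case True
      have "g r \<le> K / c * f r"
        using g[OF True] c by (simp add: field_simps)
      then show ?thesis
        using True f_nonneg[OF True] K c by (simp add: ennreal_mult[symmetric] ennreal_leI)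
    qed simp
  qed
  also have "\<dots> = ennreal (K / c) * (\<integral>\<^sup>+r. ennreal (f r) * indicator {L..} r \<partial>lborel)"
    by (rule nn_integral_cmult) (use f in measurable)
  also have "\<dots> = ennreal (K / c) * ennreal (T - F L)"
    by (simp add: nn_integral_FTC_atLeast[OF f F f_nonneg lim])
  also have "\<dots> \<le> ennreal (K / c) * ennreal B"
    using F_L by (intro mult_left_mono ennreal_leI) auto
  finally have "ennreal c * (\<integral>\<^sup>+r\<in>{L..}. ennreal (g r) \<partial>lborel) \<le> ennreal c * (ennreal (K / c) * ennreal B)"
    by (rule mult_left_mono) simp
  also have "\<dots> = ennreal K * ennreal B"
    using c K by (simp add: mult.assoc[symmetric] ennreal_mult[symmetric])
  also have "\<dots> = ennreal (K * B)"
    using K by (simp add: ennreal_mult')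
  finally show ?thesis .
qed

lemma DERIV_neg_inverse_one_plus_powr:
  fixes x r c :: real
  assumes x: "x > 0" and r: "r > 0" and c: "c > 0"
  shows "DERIV (\<lambda>r. - inverse (c * (1 + (x * r) powr c))) r :> x * (x * r) powr (c - 1) / (1 + (x * r) powr c)\<^sup>2"
proof -
  have pos: "0 < 1 + (x * r) powr c"
    using powr_ge_zero[of "x * r" c] by linarith
  have f: "DERIV (\<lambda>r. c * (1 + (x * r) powr c)) r :> c * (c * ((x * r) powr (c - 1) * x))"
    using x r by (auto intro!: derivative_eq_intros)
  have "DERIV (\<lambda>r. - inverse (c * (1 + (x * r) powr c))) r
      :> - (- (c * (c * ((x * r) powr (c - 1) * x)) * inverse ((c * (1 + (x * r) powr c)) ^ Suc (Suc 0))))"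
    by (intro DERIV_minus DERIV_inverse_fun[OF f]) (use pos c in auto)
  also have "- (- (c * (c * ((x * r) powr (c - 1) * x)) * inverse ((c * (1 + (x * r) powr c)) ^ Suc (Suc 0))))
      = x * (x * r) powr (c - 1) / (1 + (x * r) powr c)\<^sup>2"
    using pos c by (simp add: power_mult_distrib divide_simps power2_eq_square)
  finally show ?thesis .
qed

section \<open>The first integral\<close>

lemma tail_integrand_eq:
  fixes m \<delta> N p x a d r :: real
  assumes x: "x > 0" and r: "r > 0"
  shows "x powr (N + 1 - p)
      * (exp (- (x powr (2 * m) / 2) * (1 + r powr (2 * m)) + a * x powr d * (1 + \<delta> * r powr d)) * r powr N)
    = x powr (- p) * (x * (x * r) powr N) * exp (- (x powr (2 * m)) / 2 + a * x powr d)
      * exp (- ((x * r) powr (2 * m)) / 2 + a * \<delta> * (x * r) powr d)"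
proof -
  have "- (x powr (2 * m) / 2) * (1 + r powr (2 * m)) + a * x powr d * (1 + \<delta> * r powr d)
    = (- (x powr (2 * m)) / 2 + a * x powr d) + (- ((x * r) powr (2 * m)) / 2 + a * \<delta> * (x * r) powr d)"
    by (simp add: powr_mult algebra_simps)
  moreover have "x powr (N + 1 - p) = x powr (- p) * x powr 1 * x powr N"
    by (simp only: powr_add[symmetric]) (simp add: algebra_simps)
  ultimately show ?thesis
    using x r by (simp add: powr_mult exp_add mult_ac)
qed

lemma tail_integrand_le_of_less_one:
  fixes m N p d x t a b :: real
  assumes N: "N > -1" and p: "p \<ge> 0" and x: "x > 0" and t: "0 < t" "t < 1" "1 \<le> x * t"
    and a: "a \<ge> 0" and b: "b \<ge> 0" and d: "0 \<le> d" "d \<le> m"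
  shows "x powr (- p) * (x * t powr N)
      * exp (- (x powr (2 * m)) / 2 + a * x powr d) * exp (- (t powr (2 * m)) / 2 + b * t powr d)
    \<le> 4 * exp 1 * exp (a\<^sup>2 / 2 + b\<^sup>2 / 2) * (x * t powr N / (1 + t powr (N + 1))\<^sup>2)"
proof -
  have "x * t < x"
    using t x by simp
  then have "x powr (- p) \<le> x powr 0"
    using t p by (intro powr_mono) auto
  then have xp: "x powr (- p) \<le> 1"
    using x by simp
  have "x * t powr N \<le> 4 * (x * t powr N / (1 + t powr (N + 1))\<^sup>2)"
  proof -
    have pos: "0 < 1 + t powr (N + 1)"
      using powr_ge_zero[of t "N + 1"] by linarith
    have "(1 + t powr (N + 1))\<^sup>2 \<le> 2\<^sup>2"
      using t N powr_mono2[of "N + 1" t 1] by (intro power_mono) auto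
    then have "x * t powr N * (1 + t powr (N + 1))\<^sup>2 \<le> x * t powr N * 4"
      using x t by (intro mult_left_mono) auto
    then show ?thesis
      using pos by (simp add: le_divide_eq mult_ac)
  qed
  moreover have "exp (- (x powr (2 * m)) / 2 + a * x powr d) \<le> exp (a\<^sup>2 / 2 + 1 / 2)"
    using neg_half_powr_add_le[OF x a d] by simp
  moreover have "exp (- (t powr (2 * m)) / 2 + b * t powr d) \<le> exp (b\<^sup>2 / 2 + 1 / 2)"
    using neg_half_powr_add_le[OF t(1) b d] by simp
  ultimately have "x powr (- p) * (x * t powr N)
      * exp (- (x powr (2 * m)) / 2 + a * x powr d) * exp (- (t powr (2 * m)) / 2 + b * t powr d)
    \<le> 1 * (4 * (x * t powr N / (1 + t powr (N + 1))\<^sup>2)) * exp (a\<^sup>2 / 2 + 1 / 2) * exp (b\<^sup>2 / 2 + 1 / 2)"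
    using xp x t by (intro mult_mono[OF mult_mono[OF mult_mono]]) auto
  also have "\<dots> = 4 * exp 1 * exp (a\<^sup>2 / 2 + b\<^sup>2 / 2) * (x * t powr N / (1 + t powr (N + 1))\<^sup>2)"
    by (simp add: mult_exp_exp mult_ac)
  finally show ?thesis .
qed

lemma tail_integrand_le_of_ge_one:
  fixes m N p d x t a b :: real
  defines "e \<equiv> (N + p + 1) / m - 1"
  assumes m: "m > 0" and p: "p \<ge> 0" and x: "x > 0" and t: "1 \<le> t" "1 \<le> x * t"
    and a: "a \<ge> 0" and b: "b \<ge> 0" and d: "0 \<le> d" "d \<le> m"
  shows "x powr (- p) * (x * t powr N)
      * exp (- (x powr (2 * m)) / 2 + a * x powr d) * exp (- (t powr (2 * m)) / 2 + b * t powr d)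
    \<le> exp (1 / 2) * (4 * 2 powr \<bar>e\<bar> * exp (\<bar>e\<bar>\<^sup>2)) / m * (1 + b) powr e * exp (a\<^sup>2 / 2 + b\<^sup>2 / 2)
      * (m * x * t powr (m - 1) / (1 + (t powr m - b)\<^sup>2))"
proof -
  define M where "M = 4 * 2 powr \<bar>e\<bar> * exp (\<bar>e\<bar>\<^sup>2)"
  define G where "G = exp (a\<^sup>2 / 2 + b\<^sup>2 / 2)"
  have "1 / x \<le> t"
    using t x by (simp add: divide_le_eq mult.commute)
  then have "(1 / x) powr p \<le> t powr p"
    using x p by (intro powr_mono2) auto
  then have xp: "x powr (- p) \<le> t powr p"
    using x by (simp add: powr_minus_divide powr_divide)
  have "m - 1 + m * e = N + p"
    using m by (simp add: e_def field_simps)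
  then have Np: "t powr N * t powr p = t powr (m - 1 + m * e)"
    by (simp add: powr_add)
  have "x powr (- p) * (x * t powr N)
      * exp (- (x powr (2 * m)) / 2 + a * x powr d) * exp (- (t powr (2 * m)) / 2 + b * t powr d)
    \<le> t powr p * (x * t powr N)
      * exp (- (x powr (2 * m)) / 2 + a * x powr d) * exp (- (t powr (2 * m)) / 2 + b * t powr d)"
    using xp x t by (intro mult_right_mono) auto
  also have "\<dots> = x * exp (- (x powr (2 * m)) / 2 + a * x powr d)
      * (t powr (m - 1 + m * e) * exp (- (t powr (2 * m)) / 2 + b * t powr d))"
    unfolding Np[symmetric] by (simp add: mult_ac)
  also have "\<dots> \<le> x * exp (a\<^sup>2 / 2 + 1 / 2)
      * (M * exp (b\<^sup>2 / 2) * (1 + b) powr e * (t powr (m - 1) / (1 + (t powr m - b)\<^sup>2)))"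
  proof -
    have expA: "exp (- (x powr (2 * m)) / 2 + a * x powr d) \<le> exp (a\<^sup>2 / 2 + 1 / 2)"
      using neg_half_powr_add_le[OF x a d] by simp
    have gauss: "t powr (m - 1 + m * e) * exp (- (t powr (2 * m)) / 2 + b * t powr d)
        \<le> M * exp (b\<^sup>2 / 2) * (1 + b) powr e * (t powr (m - 1) / (1 + (t powr m - b)\<^sup>2))"
      using powr_exp_gaussian_le[OF t(1) m d b] by (simp add: M_def)
    show ?thesis
      by (rule mult_mono[OF mult_left_mono[OF expA] gauss]) (use x t in auto)
  qed
  also have "\<dots> = (exp (a\<^sup>2 / 2 + 1 / 2) * exp (b\<^sup>2 / 2))
      * (M * (1 + b) powr e * (x * (t powr (m - 1) / (1 + (t powr m - b)\<^sup>2))))"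
    by (simp only: mult_ac)
  also have "exp (a\<^sup>2 / 2 + 1 / 2) * exp (b\<^sup>2 / 2) = exp (1 / 2) * G"
    by (simp add: G_def mult_exp_exp algebra_simps)
  also have "exp (1 / 2) * G * (M * (1 + b) powr e * (x * (t powr (m - 1) / (1 + (t powr m - b)\<^sup>2))))
      = exp (1 / 2) * M / m * (1 + b) powr e * G * (m * x * t powr (m - 1) / (1 + (t powr m - b)\<^sup>2))"
    using m by (simp add: field_simps)
  finally show ?thesis
    by (simp only: G_def M_def)
qed

lemma tail_integrand_le:
  fixes m \<delta> N p x a d r C :: real
  defines "e \<equiv> (N + p + 1) / m - 1" and "k \<equiv> max 0 ((N + p + 1) / m - 1)"
  assumes m: "m > 0" and \<delta>: "\<delta> > 0" and N: "N > -1" and p: "p \<ge> 0"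
    and x: "x > 0" and a: "a > 0" and d: "0 \<le> d" "d \<le> m" and xr: "1 \<le> x\<^sup>2 * r"
    and C: "4 * exp 1 \<le> C" "exp (1 / 2) * (4 * 2 powr \<bar>e\<bar> * exp (\<bar>e\<bar>\<^sup>2)) / m * max 1 \<delta> powr k \<le> C"
  shows "x powr (N + 1 - p)
      * (exp (- (x powr (2 * m) / 2) * (1 + r powr (2 * m)) + a * x powr d * (1 + \<delta> * r powr d)) * r powr N)
    \<le> C * (1 + a) powr k * exp ((1 + \<delta>\<^sup>2) / 2 * a\<^sup>2)
      * (x * (x * r) powr N / (1 + (x * r) powr (N + 1))\<^sup>2
        + m * x * (x * r) powr (m - 1) / (1 + ((x * r) powr m - a * \<delta>)\<^sup>2))"
proof -
  define t where "t = x * r"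
  define b where "b = a * \<delta>"
  define G where "G = exp (a\<^sup>2 / 2 + b\<^sup>2 / 2)"
  define f1 where "f1 = x * t powr N / (1 + t powr (N + 1))\<^sup>2"
  define f2 where "f2 = m * x * t powr (m - 1) / (1 + (t powr m - b)\<^sup>2)"
  have r: "r > 0"
    using zero_less_mult_pos[of "x\<^sup>2" r] xr x by simp
  have t: "t > 0" "1 \<le> x * t"
    using x r xr by (simp_all add: t_def power2_eq_square mult.assoc)
  have b: "b \<ge> 0"
    using a \<delta> by (simp add: b_def)
  have f: "f1 \<ge> 0" "f2 \<ge> 0"
    using x t m by (simp_all add: f1_def f2_def)
  have C0: "0 \<le> C"
    using C(1) exp_ge_zero[of 1] by linarith
  have CaG: "0 \<le> C * (1 + a) powr k * G"
    using C0 by (simp add: G_def)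
  have "x powr (N + 1 - p)
      * (exp (- (x powr (2 * m) / 2) * (1 + r powr (2 * m)) + a * x powr d * (1 + \<delta> * r powr d)) * r powr N)
    = x powr (- p) * (x * t powr N)
      * exp (- (x powr (2 * m)) / 2 + a * x powr d) * exp (- (t powr (2 * m)) / 2 + b * t powr d)"
    unfolding t_def b_def by (rule tail_integrand_eq[OF x r])
  also have "\<dots> \<le> C * (1 + a) powr k * G * (f1 + f2)"
  proof (cases "t < 1")
    case True
    have "C * 1 \<le> C * (1 + a) powr k"
      using C0 a by (intro mult_left_mono) (auto simp: k_def ge_one_powr_ge_zero)
    then have "4 * exp 1 \<le> C * (1 + a) powr k"
      using C(1) by linarith
    have "x powr (- p) * (x * t powr N)
        * exp (- (x powr (2 * m)) / 2 + a * x powr d) * exp (- (t powr (2 * m)) / 2 + b * t powr d)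
      \<le> 4 * exp 1 * G * f1"
      unfolding G_def f1_def by (rule tail_integrand_le_of_less_one[OF N p x t(1) True t(2) less_imp_le[OF a] b d])
    also have "\<dots> \<le> C * (1 + a) powr k * G * f1"
      using \<open>4 * exp 1 \<le> C * (1 + a) powr k\<close> f by (intro mult_right_mono) (auto simp: G_def)
    also have "\<dots> \<le> C * (1 + a) powr k * G * (f1 + f2)"
      using CaG f by (intro mult_left_mono) auto
    finally show ?thesis .
  next
    case False
    define M where "M = 4 * 2 powr \<bar>e\<bar> * exp (\<bar>e\<bar>\<^sup>2)"
    have "x powr (- p) * (x * t powr N)
        * exp (- (x powr (2 * m)) / 2 + a * x powr d) * exp (- (t powr (2 * m)) / 2 + b * t powr d)
      \<le> exp (1 / 2) * M / m * (1 + b) powr e * G * f2"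
      using False unfolding G_def f2_def M_def e_def
      by (intro tail_integrand_le_of_ge_one[OF m p x _ t(2) less_imp_le[OF a] b d]) simp
    also have "\<dots> \<le> C * (1 + a) powr k * G * f2"
    proof -
      have "exp (1 / 2) * M / m * (1 + b) powr e \<le> exp (1 / 2) * M / m * (max 1 \<delta> powr k * (1 + a) powr k)"
        using one_plus_mult_powr_le[of a \<delta> e k] a \<delta> m
        by (intro mult_left_mono) (auto simp: b_def e_def k_def M_def)
      also have "\<dots> = exp (1 / 2) * M / m * max 1 \<delta> powr k * (1 + a) powr k"
        by (simp only: mult.assoc)
      also have "\<dots> \<le> C * (1 + a) powr k"
        using C(2) by (intro mult_right_mono) (auto simp: M_def)
      finally show ?thesis
        using f by (intro mult_right_mono) (auto simp: G_def)
    qed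
    also have "\<dots> \<le> C * (1 + a) powr k * G * (f1 + f2)"
      using CaG f by (intro mult_left_mono) auto
    finally show ?thesis .
  qed
  also have "G = exp ((1 + \<delta>\<^sup>2) / 2 * a\<^sup>2)"
    by (simp add: G_def b_def power_mult_distrib algebra_simps)
  finally show ?thesis
    by (simp only: f1_def f2_def t_def b_def)
qed

lemma tail_antiderivative:
  fixes x N m b :: real
  defines "F \<equiv> \<lambda>r. - inverse ((N + 1) * (1 + (x * r) powr (N + 1))) + arctan ((x * r) powr m - b)"
  assumes x: "x > 0" and N: "N > -1" and m: "m > 0"
  shows "\<And>r. r > 0 \<Longrightarrow> DERIV F r :> x * (x * r) powr N / (1 + (x * r) powr (N + 1))\<^sup>2
      + m * x * (x * r) powr (m - 1) / (1 + ((x * r) powr m - b)\<^sup>2)"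
    and "(F \<longlongrightarrow> pi / 2) at_top"
    and "\<And>r. pi / 2 - F r \<le> pi + 1 / (N + 1)"
proof -
  show "DERIV F r :> x * (x * r) powr N / (1 + (x * r) powr (N + 1))\<^sup>2
      + m * x * (x * r) powr (m - 1) / (1 + ((x * r) powr m - b)\<^sup>2)" if r: "r > 0" for r
  proof -
    have "DERIV (\<lambda>r. - inverse ((N + 1) * (1 + (x * r) powr (N + 1)))) r
        :> x * (x * r) powr N / (1 + (x * r) powr (N + 1))\<^sup>2"
      using DERIV_neg_inverse_one_plus_powr[of x r "N + 1"] x r N by simp
    moreover have "DERIV (\<lambda>r. arctan ((x * r) powr m - b)) r
        :> m * x * (x * r) powr (m - 1) / (1 + ((x * r) powr m - b)\<^sup>2)"
      using x r m by (auto intro!: derivative_eq_intros simp: field_simps)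
    ultimately show ?thesis
      unfolding F_def by (rule DERIV_add)
  qed
  show "(F \<longlongrightarrow> pi / 2) at_top"
    unfolding F_def using x N m by real_asymp
  show "pi / 2 - F r \<le> pi + 1 / (N + 1)" for r
  proof -
    have "(N + 1) * 1 \<le> (N + 1) * (1 + (x * r) powr (N + 1))"
      using N by (intro mult_left_mono) auto
    then have "inverse ((N + 1) * (1 + (x * r) powr (N + 1))) \<le> 1 / (N + 1)"
      using N le_imp_inverse_le[of "N + 1"] by (simp add: inverse_eq_divide)
    then show ?thesis
      using arctan_lbound[of "(x * r) powr m - b"] unfolding F_def by linarith
  qed
qed

lemma tail_integral_le:
  fixes m \<delta> R N p :: real
  assumes m: "m > 0" and \<delta>: "\<delta> > 0" and R: "R \<ge> 1" and N: "N > -1" and p: "p \<ge> 0"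
  shows "\<forall>\<^sub>F C in at_top. \<forall>x a d :: real. x > 0 \<longrightarrow> a > 0 \<longrightarrow> 0 \<le> d \<longrightarrow> d \<le> m \<longrightarrow>
     ennreal (x powr (N + 1 - p)) *
       (\<integral>\<^sup>+ r\<in>{R / x\<^sup>2..}.
          ennreal (exp (- (x powr (2*m) / 2) * (1 + r powr (2*m)) + a * x powr d * (1 + \<delta> * r powr d))
                   * r powr N) \<partial>lborel)
       \<le> ennreal (C * (1 + a) powr (max 0 ((N + p + 1) / m - 1)) * exp ((1 + \<delta>\<^sup>2) / 2 * a\<^sup>2))"
proof -
  define e where "e = (N + p + 1) / m - 1"
  define k where "k = max 0 ((N + p + 1) / m - 1)"
  define C1 where "C1 = max (4 * exp 1) (exp (1 / 2) * (4 * 2 powr \<bar>e\<bar> * exp (\<bar>e\<bar>\<^sup>2)) / m * max 1 \<delta> powr k)"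
  define B where "B = pi + 1 / (N + 1)"
  have B: "B > 0"
    using N pi_gt_zero by (simp add: B_def add_pos_pos)
  have C1: "C1 > 0"
    by (simp add: C1_def less_max_iff_disj)
  show ?thesis
    unfolding eventually_at_top_linorder
  proof (intro exI[of _ "B * C1"] allI impI)
    fix C x a d :: real
    assume C: "B * C1 \<le> C" and x: "x > 0" and a: "a > 0" and d: "0 \<le> d" "d \<le> m"
    define K where "K = C / B * (1 + a) powr k * exp ((1 + \<delta>\<^sup>2) / 2 * a\<^sup>2)"
    define F where "F = (\<lambda>r. - inverse ((N + 1) * (1 + (x * r) powr (N + 1))) + arctan ((x * r) powr m - a * \<delta>))"
    define f where "f = (\<lambda>r. x * (x * r) powr N / (1 + (x * r) powr (N + 1))\<^sup>2
      + m * x * (x * r) powr (m - 1) / (1 + ((x * r) powr m - a * \<delta>)\<^sup>2))"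
    have CB: "C1 \<le> C / B"
      using C B by (simp add: field_simps)
    have C1_le: "4 * exp 1 \<le> C / B"
        "exp (1 / 2) * (4 * 2 powr \<bar>e\<bar> * exp (\<bar>e\<bar>\<^sup>2)) / m * max 1 \<delta> powr k \<le> C / B"
      using order_trans[OF max.cobounded1 CB[unfolded C1_def]] order_trans[OF max.cobounded2 CB[unfolded C1_def]]
      by simp_all
    have "ennreal (x powr (N + 1 - p)) *
       (\<integral>\<^sup>+ r\<in>{R / x\<^sup>2..}.
          ennreal (exp (- (x powr (2*m) / 2) * (1 + r powr (2*m)) + a * x powr d * (1 + \<delta> * r powr d))
                   * r powr N) \<partial>lborel) \<le> ennreal (K * B)" (is "?I \<le> _")
    proof (rule set_nn_integral_atLeast_le_antiderivative[where f = f and F = F and T = "pi / 2"])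
      show "f \<in> borel_measurable borel"
        unfolding f_def by measurable
      show "(F \<longlongrightarrow> pi / 2) at_top"
        unfolding F_def by (rule tail_antiderivative(2)[OF x N m])
      show "pi / 2 - F (R / x\<^sup>2) \<le> B"
        unfolding F_def B_def by (rule tail_antiderivative(3)[OF x N m])
      show "x powr (N + 1 - p) > 0"
        using x by simp
      show "K \<ge> 0"
        unfolding K_def using C1 CB by (intro mult_nonneg_nonneg) auto
      fix r
      assume "R / x\<^sup>2 \<le> r"
      then have r: "r > 0" "1 \<le> x\<^sup>2 * r"
        using R x zero_less_power[of x 2] divide_pos_pos[of R "x\<^sup>2"] by (linarith, simp add: field_simps)
      show "DERIV F r :> f r"
        unfolding F_def f_def by (rule tail_antiderivative(1)[OF x N m r(1)])
      show "0 \<le> f r"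
        unfolding f_def using x r m by (intro add_nonneg_nonneg divide_nonneg_nonneg mult_nonneg_nonneg) auto
      show "x powr (N + 1 - p) * (exp (- (x powr (2*m) / 2) * (1 + r powr (2*m)) + a * x powr d * (1 + \<delta> * r powr d))
                   * r powr N) \<le> K * f r"
        unfolding K_def f_def k_def
        by (rule tail_integrand_le[OF m \<delta> N p x a d r(2) C1_le[unfolded e_def k_def]])
    qed
    also have "K * B = C * (1 + a) powr (max 0 ((N + p + 1) / m - 1)) * exp ((1 + \<delta>\<^sup>2) / 2 * a\<^sup>2)"
      using B by (simp add: K_def k_def)
    finally show "?I \<le> ennreal (C * (1 + a) powr (max 0 ((N + p + 1) / m - 1)) * exp ((1 + \<delta>\<^sup>2) / 2 * a\<^sup>2))" .
  qed
qed

section \<open>The second integral\<close>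

lemma centred_integrand_le_of_ge_one:
  fixes m x a d r :: real
  assumes m: "m > 0" and x: "x > 0" and a: "a \<ge> 0" and d: "0 \<le> d"
    and r: "r \<ge> 1" and xr: "1 \<le> x\<^sup>2 * r"
  shows "x powr m * (exp (- (x powr (2 * m) / 2) * (1 - r powr m)\<^sup>2 + a * x powr d * (1 - r powr d)) * r powr (m / 2))
    \<le> 4 * tail_decay_const m / m * (m * x powr m * r powr (m - 1) / (1 + (x powr m * (r powr m - 1))\<^sup>2))"
proof -
  define X where "X = x powr m"
  define v where "v = X * (r powr m - 1)"
  have X: "X > 0"
    using x by (simp add: X_def)
  have D: "tail_decay_const m \<ge> 0"
    by (simp add: tail_decay_const_def le_max_iff_disj)
  have "a * x powr d * (1 - r powr d) \<le> 0"
    using a x r d ge_one_powr_ge_zero[of r d] by (intro mult_nonneg_nonpos) auto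
  moreover have "(x powr (2 * m) / 2) * (1 - r powr m)\<^sup>2 = v\<^sup>2 / 2"
    using x by (simp add: X_def v_def power2_eq_square powr_add[symmetric] algebra_simps)
  ultimately have exponent: "- (x powr (2 * m) / 2) * (1 - r powr m)\<^sup>2 + a * x powr d * (1 - r powr d)
      \<le> - (v\<^sup>2) / 4 + - (v\<^sup>2) / 4"
    by linarith
  have "r powr (m / 2) \<le> r powr (m - 1) * r"
    using r m powr_mono[of "m / 2" m r] by (simp add: powr_diff)
  then have "x powr m * (exp (- (x powr (2 * m) / 2) * (1 - r powr m)\<^sup>2 + a * x powr d * (1 - r powr d))
      * r powr (m / 2)) \<le> X * (exp (- (v\<^sup>2) / 4 + - (v\<^sup>2) / 4) * (r powr (m - 1) * r))"
    using exponent X by (simp add: X_def mult_mono)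
  also have "\<dots> = X * r powr (m - 1) * (r * exp (- (v\<^sup>2) / 4)) * exp (- (v\<^sup>2) / 4)"
    by (simp only: exp_add mult_ac)
  also have "\<dots> \<le> X * r powr (m - 1) * tail_decay_const m * (4 / (1 + v\<^sup>2))"
    using mult_exp_neg_sq_powr_le[OF m x r xr] exp_neg_sq_le_inverse[of v] X r D
    by (intro mult_mono mult_left_mono) (auto simp: X_def v_def)
  also have "\<dots> = 4 * tail_decay_const m / m * (m * X * r powr (m - 1) / (1 + v\<^sup>2))"
    using m by (simp add: field_simps)
  finally show ?thesis
    by (simp add: X_def v_def)
qed

lemma centred_integrand_le_of_less_one:
  fixes m x a d r :: real
  assumes m: "m > 0" and x: "x \<ge> 1" and a: "a \<ge> 0" and d: "0 \<le> d" "d \<le> m"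
    and r: "0 < r" "r < 1"
  shows "x powr m * (exp (- (x powr (2 * m) / 2) * (1 - r powr m)\<^sup>2 + a * x powr d * (1 - r powr d)) * r powr (m / 2))
    \<le> exp (a\<^sup>2 / 2) * (8 / m * (m * x powr m * r powr (m - 1) / (1 + (x powr m * (1 - r powr m) - a)\<^sup>2))
      + 16 * (1 + a) * (1 / (1 + r\<^sup>2)))"
proof -
  define X where "X = x powr m"
  define v where "v = X * (1 - r powr m)"
  have X: "X > 0"
    using x by (simp add: X_def)
  have "a * x powr d * (1 - r powr d) \<le> a * X * (1 - r powr m)"
    using x d r a X powr_mono[of d m x] powr_mono'[of d m r] powr_mono2[of d r 1]
    by (intro mult_mono) (auto simp: X_def)
  moreover have "(x powr (2 * m) / 2) * (1 - r powr m)\<^sup>2 = v\<^sup>2 / 2"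
    using x by (simp add: X_def v_def power2_eq_square powr_add[symmetric] algebra_simps)
  moreover have "- (v\<^sup>2) / 2 + a * v = a\<^sup>2 / 2 + - ((v - a)\<^sup>2) / 2"
    by (simp add: power2_eq_square field_simps)
  ultimately have "- (x powr (2 * m) / 2) * (1 - r powr m)\<^sup>2 + a * x powr d * (1 - r powr d)
      \<le> a\<^sup>2 / 2 + - ((v - a)\<^sup>2) / 2"
    by (simp add: v_def algebra_simps)
  then have "exp (- (x powr (2 * m) / 2) * (1 - r powr m)\<^sup>2 + a * x powr d * (1 - r powr d))
      \<le> exp (a\<^sup>2 / 2) * exp (- ((v - a)\<^sup>2) / 2)"
    by (simp flip: exp_add)
  then have "X * (exp (- (x powr (2 * m) / 2) * (1 - r powr m)\<^sup>2 + a * x powr d * (1 - r powr d))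
      * r powr (m / 2)) \<le> X * (exp (a\<^sup>2 / 2) * exp (- ((v - a)\<^sup>2) / 2) * r powr (m / 2))"
    using X by (intro mult_left_mono mult_right_mono) auto
  also have "\<dots> = exp (a\<^sup>2 / 2) * (X * exp (- ((v - a)\<^sup>2) / 2) * r powr (m / 2))"
    by (simp only: mult_ac)
  also have "\<dots> \<le> exp (a\<^sup>2 / 2) * (8 / m * (m * X * r powr (m - 1) / (1 + (v - a)\<^sup>2))
      + 16 * (1 + a) * (1 / (1 + r\<^sup>2)))"
    using gaussian_shift_powr_half_le[OF m X a r] by (intro mult_left_mono) (simp_all add: v_def)
  finally show ?thesis
    by (simp add: X_def v_def)
qed

lemma centred_tail_integrand_le:
  fixes m x a d r C :: real
  assumes m: "m > 0" and x: "x > 0" and a: "a > 0" and d: "0 \<le> d" "d \<le> m" and xr: "1 \<le> x\<^sup>2 * r"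
    and C: "4 * tail_decay_const m / m \<le> C" "8 / m \<le> C" "16 \<le> C"
  shows "x powr m * (exp (- (x powr (2 * m) / 2) * (1 - r powr m)\<^sup>2 + a * x powr d * (1 - r powr d)) * r powr (m / 2))
    \<le> C * (1 + a) * exp (a\<^sup>2 / 2)
      * (m * x powr m * r powr (m - 1) / (1 + (x powr m * (r powr m - 1))\<^sup>2)
        + m * x powr m * r powr (m - 1) / (1 + (x powr m * (1 - r powr m) - a)\<^sup>2)
        + 1 / (1 + r\<^sup>2))"
proof -
  define f1 where "f1 = m * x powr m * r powr (m - 1) / (1 + (x powr m * (r powr m - 1))\<^sup>2)"
  define f2 where "f2 = m * x powr m * r powr (m - 1) / (1 + (x powr m * (1 - r powr m) - a)\<^sup>2)"
  define f3 where "f3 = 1 / (1 + r\<^sup>2)"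
  have r: "r > 0"
    using zero_less_mult_pos[of "x\<^sup>2" r] xr x by simp
  have f: "0 \<le> f1" "0 \<le> f2" "0 \<le> f3"
    using m x r zero_le_power2[of r] by (simp_all add: f1_def f2_def f3_def add_nonneg_nonneg)
  have C0: "0 \<le> C"
    using C(3) by simp
  have "x powr m * (exp (- (x powr (2 * m) / 2) * (1 - r powr m)\<^sup>2 + a * x powr d * (1 - r powr d)) * r powr (m / 2))
    \<le> C * (1 + a) * exp (a\<^sup>2 / 2) * (f1 + f2 + f3)"
  proof (cases "r \<ge> 1")
    case True
    have "x powr m * (exp (- (x powr (2 * m) / 2) * (1 - r powr m)\<^sup>2 + a * x powr d * (1 - r powr d))
        * r powr (m / 2)) \<le> 4 * tail_decay_const m / m * f1"
      using centred_integrand_le_of_ge_one[OF m x _ d(1) True xr] a by (simp add: f1_def)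
    also have "\<dots> \<le> C * (1 + a) * exp (a\<^sup>2 / 2) * f1"
    proof -
      have "1 * 1 \<le> (1 + a) * exp (a\<^sup>2 / 2)"
        using a by (intro mult_mono) auto
      then have "C * 1 \<le> C * ((1 + a) * exp (a\<^sup>2 / 2))"
        using C0 by (intro mult_left_mono) auto
      then show ?thesis
        using C(1) f by (intro mult_right_mono) (auto simp: mult.assoc)
    qed
    also have "\<dots> \<le> C * (1 + a) * exp (a\<^sup>2 / 2) * (f1 + f2 + f3)"
      using C0 a f by (intro mult_left_mono) auto
    finally show ?thesis .
  next
    case False
    have "x\<^sup>2 * r < x\<^sup>2 * 1"
      using False x by (intro mult_strict_left_mono) auto
    then have "1\<^sup>2 < x\<^sup>2"
      using xr by simp
    then have "1 \<le> x"
      using power_less_imp_less_base[of 1 2 x] x by simp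
    then have "x powr m * (exp (- (x powr (2 * m) / 2) * (1 - r powr m)\<^sup>2 + a * x powr d * (1 - r powr d))
        * r powr (m / 2)) \<le> exp (a\<^sup>2 / 2) * (8 / m * f2 + 16 * (1 + a) * f3)"
      using centred_integrand_le_of_less_one[OF m _ _ d r] False a by (simp add: f2_def f3_def)
    also have "\<dots> \<le> exp (a\<^sup>2 / 2) * (C * (1 + a) * f2 + C * (1 + a) * f3)"
    proof -
      have "8 / m * 1 \<le> C * (1 + a)"
        using C(2) C0 a by (intro mult_mono) auto
      then have "8 / m * f2 \<le> C * (1 + a) * f2"
        using f by (intro mult_right_mono) auto
      moreover have "16 * (1 + a) * f3 \<le> C * (1 + a) * f3"
        using C(3) a f by (intro mult_right_mono) auto
      ultimately show ?thesis
        by (intro mult_left_mono add_mono) auto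
    qed
    also have "\<dots> \<le> C * (1 + a) * exp (a\<^sup>2 / 2) * (f1 + f2 + f3)"
      using C0 a f by (simp add: algebra_simps)
    finally show ?thesis .
  qed
  then show ?thesis
    by (simp add: f1_def f2_def f3_def)
qed

lemma centred_antiderivative:
  fixes X m a :: real
  defines "F \<equiv> \<lambda>r. arctan (X * (r powr m - 1)) - arctan (X * (1 - r powr m) - a) + arctan r"
  assumes X: "X > 0" and m: "m > 0"
  shows "\<And>r. r > 0 \<Longrightarrow> DERIV F r :> m * X * r powr (m - 1) / (1 + (X * (r powr m - 1))\<^sup>2)
      + m * X * r powr (m - 1) / (1 + (X * (1 - r powr m) - a)\<^sup>2) + 1 / (1 + r\<^sup>2)"
    and "(F \<longlongrightarrow> 3 * pi / 2) at_top"
    and "\<And>r. 3 * pi / 2 - F r \<le> 3 * pi"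
proof -
  show "DERIV F r :> m * X * r powr (m - 1) / (1 + (X * (r powr m - 1))\<^sup>2)
      + m * X * r powr (m - 1) / (1 + (X * (1 - r powr m) - a)\<^sup>2) + 1 / (1 + r\<^sup>2)" if "r > 0" for r
    unfolding F_def using that m by (auto intro!: derivative_eq_intros simp: field_simps)
  show "(F \<longlongrightarrow> 3 * pi / 2) at_top"
    unfolding F_def using X m by real_asymp
  show "3 * pi / 2 - F r \<le> 3 * pi" for r
    using arctan_lbound[of "X * (r powr m - 1)"] arctan_ubound[of "X * (1 - r powr m) - a"] arctan_lbound[of r]
    unfolding F_def by linarith
qed

lemma centred_tail_integral_le:
  fixes m R :: real
  assumes m: "m > 0" and R: "R \<ge> 1"
  shows "\<forall>\<^sub>F C in at_top. \<forall>x a d :: real. x > 0 \<longrightarrow> a > 0 \<longrightarrow> 0 \<le> d \<longrightarrow> d \<le> m \<longrightarrow>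
     ennreal (x powr m) *
       (\<integral>\<^sup>+ r\<in>{R / x\<^sup>2..}.
          ennreal (exp (- (x powr (2*m) / 2) * (1 - r powr m)\<^sup>2 + a * x powr d * (1 - r powr d))
                   * r powr (m / 2)) \<partial>lborel)
       \<le> ennreal (C * (1 + a) * exp (a\<^sup>2 / 2))"
proof -
  define C2 where "C2 = max (4 * tail_decay_const m / m) (max (8 / m) 16)"
  have C2: "C2 > 0"
    by (simp add: C2_def less_max_iff_disj)
  show ?thesis
    unfolding eventually_at_top_linorder
  proof (intro exI[of _ "3 * pi * C2"] allI impI)
    fix C x a d :: real
    assume C: "3 * pi * C2 \<le> C" and x: "x > 0" and a: "a > 0" and d: "0 \<le> d" "d \<le> m"
    define X where "X = x powr m"
    define K where "K = C / (3 * pi) * (1 + a) * exp (a\<^sup>2 / 2)"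
    define F where "F = (\<lambda>r. arctan (X * (r powr m - 1)) - arctan (X * (1 - r powr m) - a) + arctan r)"
    define f where "f = (\<lambda>r. m * X * r powr (m - 1) / (1 + (X * (r powr m - 1))\<^sup>2)
      + m * X * r powr (m - 1) / (1 + (X * (1 - r powr m) - a)\<^sup>2) + 1 / (1 + r\<^sup>2))"
    have X: "X > 0"
      using x by (simp add: X_def)
    have CB: "C2 \<le> C / (3 * pi)"
      using C by (simp add: field_simps)
    have C2_le: "4 * tail_decay_const m / m \<le> C / (3 * pi)" "8 / m \<le> C / (3 * pi)" "16 \<le> C / (3 * pi)"
      using CB unfolding C2_def by simp_all
    have "ennreal (x powr m) *
       (\<integral>\<^sup>+ r\<in>{R / x\<^sup>2..}.
          ennreal (exp (- (x powr (2*m) / 2) * (1 - r powr m)\<^sup>2 + a * x powr d * (1 - r powr d))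
                   * r powr (m / 2)) \<partial>lborel) \<le> ennreal (K * (3 * pi))" (is "?I \<le> _")
    proof (rule set_nn_integral_atLeast_le_antiderivative[where f = f and F = F and T = "3 * pi / 2"])
      show "f \<in> borel_measurable borel"
        unfolding f_def by measurable
      show "(F \<longlongrightarrow> 3 * pi / 2) at_top"
        unfolding F_def by (rule centred_antiderivative(2)[OF X m])
      show "3 * pi / 2 - F (R / x\<^sup>2) \<le> 3 * pi"
        unfolding F_def by (rule centred_antiderivative(3)[OF X m])
      show "x powr m > 0"
        using x by simp
      show "K \<ge> 0"
        unfolding K_def using C2 CB a by (intro mult_nonneg_nonneg) auto
      fix r
      assume "R / x\<^sup>2 \<le> r"
      then have r: "r > 0" "1 \<le> x\<^sup>2 * r"
        using R x zero_less_power[of x 2] divide_pos_pos[of R "x\<^sup>2"] by (linarith, simp add: field_simps)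
      show "DERIV F r :> f r"
        unfolding F_def f_def by (rule centred_antiderivative(1)[OF X m r(1)])
      show "0 \<le> f r"
        unfolding f_def using X r m by (intro add_nonneg_nonneg divide_nonneg_nonneg mult_nonneg_nonneg) auto
      show "x powr m * (exp (- (x powr (2*m) / 2) * (1 - r powr m)\<^sup>2 + a * x powr d * (1 - r powr d))
                   * r powr (m / 2)) \<le> K * f r"
        unfolding K_def f_def X_def by (rule centred_tail_integrand_le[OF m x a d r(2) C2_le])
    qed
    also have "K * (3 * pi) = C * (1 + a) * exp (a\<^sup>2 / 2)"
      by (simp add: K_def)
    finally show "?I \<le> ennreal (C * (1 + a) * exp (a\<^sup>2 / 2))" .
  qed
qed

theorem lemma4:
  fixes m \<delta> R N p :: real
  assumes "m > 0" and "\<delta> > 0" and "R \<ge> 1" and "N > -1" and "p \<ge> 0"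
  shows "\<exists>C>0. \<forall>x a d :: real. x > 0 \<longrightarrow> a > 0 \<longrightarrow> 0 \<le> d \<longrightarrow> d \<le> m \<longrightarrow>
     ennreal (x powr (N + 1 - p)) *
       (\<integral>\<^sup>+ r\<in>{R / x\<^sup>2..}.
          ennreal (exp (- (x powr (2*m) / 2) * (1 + r powr (2*m)) + a * x powr d * (1 + \<delta> * r powr d))
                   * r powr N) \<partial>lborel)
       \<le> ennreal (C * (1 + a) powr (max 0 ((N + p + 1) / m - 1)) * exp ((1 + \<delta>\<^sup>2) / 2 * a\<^sup>2))
   \<and> ennreal (x powr m) *
       (\<integral>\<^sup>+ r\<in>{R / x\<^sup>2..}.
          ennreal (exp (- (x powr (2*m) / 2) * (1 - r powr m)\<^sup>2 + a * x powr d * (1 - r powr d))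
                   * r powr (m / 2)) \<partial>lborel)
       \<le> ennreal (C * (1 + a) * exp (a\<^sup>2 / 2))"
  using eventually_happens'[OF trivial_limit_at_top_linorder
      eventually_conj[OF eventually_gt_at_top[of "0::real"]
        eventually_conj[OF tail_integral_le[OF assms] centred_tail_integral_le[OF assms(1,3)]]]]
  by (simp only: imp_conjR all_conj_distrib)

end
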